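(* Let $N\ge 3$ and let $D_N$ be the directed graph on the $2N$ vertices $(i,n)$, $i\in\{1,\dots,N\}$, $n\in\{0,1\}$ (indices $i$ taken cyclically, $N+1\equiv 1$, $0\equiv N$), whose arcs are exactly: $(1,0)\to(1,1)$; $(i,0)\to(i-1,0)$ for $2\le i\le N-1$; $(N,0)\to(1,0)$; and, for every $i$, $(i,1)\to(i+1,1)$, $(i,1)\to(i-1,1)$, $(i,1)\to(i,0)$. For a vertex $x$ let $|M(x)|$ denote the number of in-trees of $D_N$ rooted at $x$. Let $b_1=3$, $b_2=8$, $b_n=3b_{n-1}-b_{n-2}$ for $n\ge 3$ (so $b_n$ is the determinant of the $n\times n$ tridiagonal matrix with $3$ on the diagonal and $-1$ on the two adjacent diagonals). Then $$|M((1,1))|=b_{N-1},\qquad |M((2,1))|=b_{N-2}+1,\qquad |M((2,0))|=2b_{N-1}-3b_{N-2}-3,$$ and consequently $|M((2,1))|+|M((2,0))|-|M((1,1))|=b_{N-1}-2b_{N-2}-2$, which equals $0$ for $N=3$ and is strictly positive for every $N\ge 4$.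
   Context: An in-tree of a directed graph rooted at a vertex $x$ is a spanning subgraph in which every vertex other than $x$ has exactly one outgoing arc, $x$ has none, and there are no directed cycles (so following arcs from any vertex leads to $x$). The digraph $D_N$ is the digraph of preferred transitions of a flashing-ratchet Markov jump process: two rings of $N$ states, outer ring ($n=0$) with rates $\lambda((i,0),(i\pm1,0))=e^{\frac\beta2(E_i-E_{i\pm1})}$ for energies $E_1<\dots<E_N$, inner ring ($n=1$) with all nearest-neighbour rates equal to $1$, and rates $1$ between $(i,0)$ and $(i,1)$; the quantity $|M((2,1))|+|M((2,0))|-|M((1,1))|$ is, up to the normalization, the leading low-temperature value of the clockwise ratchet current in that model. *)

theory Defs
  imports Main
begin

definition DV :: "nat \<Rightarrow> (nat \<times> nat) set" where
  "DV N = {1..N} \<times> {0,1}"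

definition csuc :: "nat \<Rightarrow> nat \<Rightarrow> nat" where
  "csuc N i = (if i = N then 1 else i + 1)"

definition cpred :: "nat \<Rightarrow> nat \<Rightarrow> nat" where
  "cpred N i = (if i = 1 then N else i - 1)"

definition DA :: "nat \<Rightarrow> ((nat \<times> nat) \<times> (nat \<times> nat)) set" where
  "DA N =
     {((1,0),(1,1))}
   \<union> {((i,0),(i - 1,0)) | i. 2 \<le> i \<and> i \<le> N - 1}
   \<union> {((N,0),(1,0))}
   \<union> {((i,1),(csuc N i,1)) | i. 1 \<le> i \<and> i \<le> N}
   \<union> {((i,1),(cpred N i,1)) | i. 1 \<le> i \<and> i \<le> N}
   \<union> {((i,1),(i,0)) | i. 1 \<le> i \<and> i \<le> N}"

definition is_in_tree :: "'a set \<Rightarrow> ('a \<times> 'a) set \<Rightarrow> 'a \<Rightarrow> ('a \<times> 'a) set \<Rightarrow> bool" where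
  "is_in_tree V A x T \<longleftrightarrow>
     T \<subseteq> A \<and>
     (\<forall>v\<in>V. v \<noteq> x \<longrightarrow> (\<exists>!w. (v, w) \<in> T)) \<and>
     (\<forall>w. (x, w) \<notin> T) \<and>
     acyclic T"

definition numM :: "nat \<Rightarrow> nat \<times> nat \<Rightarrow> nat" where
  "numM N x = card {T. is_in_tree (DV N) (DA N) x T}"

text \<open>b_1 = 3, b_2 = 8, b_n = 3 b_(n-1) - b_(n-2); b 0 = 1 is only an auxiliary
  seed consistent with the recursion (3*3 - 1 = 8) and is never used below.\<close>
fun b :: "nat \<Rightarrow> int" where
  "b 0 = 1"
| "b (Suc 0) = 3"
| "b (Suc (Suc n)) = 3 * b (Suc n) - b n"

end

theory Submission
  imports Defs
begin

text \<open>Outer vertices have no choice, so the in-trees correspond to the words over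
  \<open>{down, left, right}\<close> on the inner ring whose functional graph is acyclic. Adjacent inner
  vertices pointing at each other form a 2-cycle; conversely, without such a right-left pair
  a left or right walk along the inner ring keeps its direction until it steps down to the
  outer ring, which leads to the root or back to \<open>(1,1)\<close>. So acyclicity means avoiding the
  factor right-left, plus boundary conditions depending on the root. Splitting by the first
  letter, words of length \<open>n\<close> avoiding that factor number \<open>c (n+2) = 3 c (n+1) - c n\<close>, the
  recursion of \<open>b\<close>, and the three counts follow by removing a few exceptional words.\<close>

section \<open>Functional graphs\<close>

lemma single_valued_cycle_propagates:
  assumes "single_valued T" and "(x,x) \<in> T\<^sup>+" and "(x,y) \<in> T\<^sup>*"
  shows "(y,y) \<in> T\<^sup>+"
  using assms(3,2)
proof (induction rule: rtrancl_induct)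
  case (step y z)
  then obtain w where "(y,w) \<in> T" "(w,y) \<in> T\<^sup>*" by (metis tranclD)
  with \<open>(y,z) \<in> T\<close> assms(1) have "w = z" by (auto dest: single_valuedD)
  with \<open>(w,y) \<in> T\<^sup>*\<close> \<open>(y,z) \<in> T\<close> show ?case by (meson rtrancl_into_trancl1)
qed

text \<open>In a functional graph every cycle is closed under successors, so it cannot
  contain a vertex that reaches a sink.\<close>
lemma acyclic_if_reaches_sink:
  assumes "single_valued T" and "\<And>w. (r,w) \<notin> T"
    and "\<And>v w. (v,w) \<in> T \<Longrightarrow> (v,r) \<in> T\<^sup>*"
  shows "acyclic T"
  unfolding acyclic_def
proof (intro allI notI)
  fix x assume "(x,x) \<in> T\<^sup>+"
  moreover from this obtain u where "(x,u) \<in> T" by (metis tranclD)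
  ultimately have "(r,r) \<in> T\<^sup>+"
    using assms single_valued_cycle_propagates by metis
  then show False using assms(2) by (metis tranclD)
qed

lemma acyclic_no_cycle:
  assumes "acyclic T" "(u,v) \<in> T" "(v,u) \<in> T\<^sup>*"
  shows False
  using assms by (meson acyclic_def rtrancl_into_trancl2)

lemma subset_single_valued_eq:
  assumes "A \<subseteq> B" "single_valued B" "Domain B \<subseteq> Domain A"
  shows "A = B"
proof
  show "B \<subseteq> A"
  proof
    fix e assume "e \<in> B"
    then obtain v w where e: "e = (v,w)" "(v,w) \<in> B" by (cases e) auto
    then obtain w' where "(v,w') \<in> A" using assms(3) by blast
    with assms(1,2) e show "e \<in> A" by (metis single_valuedD subsetD)
  qed
qed (fact assms(1))

lemma nth_infix_eq_replicate_iff: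
  assumes "length xs = k" "length u = m"
  shows "(\<forall>i. k < i \<and> i \<le> k + m \<longrightarrow> (xs @ u @ ys)!(i-1) = c) \<longleftrightarrow> u = replicate m c"
proof -
  have "(\<forall>i. k < i \<and> i \<le> k + m \<longrightarrow> (xs @ u @ ys)!(i-1) = c) \<longleftrightarrow> (\<forall>j<m. u!j = c)"
  proof (intro iffI allI impI)
    fix j assume "\<forall>i. k < i \<and> i \<le> k + m \<longrightarrow> (xs @ u @ ys)!(i-1) = c" "j < m"
    then show "u!j = c" using assms by (auto simp: nth_append dest: spec[of _ "Suc (k + j)"])
  next
    fix i assume "\<forall>j<m. u!j = c" "k < i \<and> i \<le> k + m"
    then show "(xs @ u @ ys)!(i-1) = c" using assms by (auto simp: nth_append)
  qed
  also have "\<dots> \<longleftrightarrow> u = replicate m c"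
    using assms by (auto simp: list_eq_iff_nth_eq)
  finally show ?thesis .
qed

section \<open>In-trees as choice words\<close>

text \<open>Inner vertex \<open>i\<close> reads its choice (\<open>0\<close> down, \<open>1\<close> left, \<open>2\<close> right) at list position
  \<open>i - 1\<close>; an inner root carries the dummy choice \<open>0\<close>, which keeps the encoding injective.\<close>

definition outer_step :: "nat \<Rightarrow> nat \<Rightarrow> nat \<times> nat" where
  "outer_step N i = (if i = 1 then (1,1) else if i = N then (1,0) else (i - 1, 0))"

definition inner_step :: "nat \<Rightarrow> nat \<Rightarrow> nat \<Rightarrow> nat \<times> nat" where
  "inner_step N i k = (if k = 0 then (i,0) else if k = 1 then (cpred N i, 1) else (csuc N i, 1))"

definition word_graph :: "nat \<Rightarrow> nat \<times> nat \<Rightarrow> nat list \<Rightarrow> ((nat \<times> nat) \<times> (nat \<times> nat)) set" where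
  "word_graph N r ws =
     {((i,0), outer_step N i) | i. 1 \<le> i \<and> i \<le> N \<and> (i,0) \<noteq> r}
   \<union> {((i,1), inner_step N i (ws!(i-1))) | i. 1 \<le> i \<and> i \<le> N \<and> (i,1) \<noteq> r}"

definition choice_words :: "nat \<Rightarrow> nat \<times> nat \<Rightarrow> nat list set" where
  "choice_words N r = {ws. length ws = N \<and> set ws \<subseteq> {0,1,2} \<and> (snd r = 1 \<longrightarrow> ws!(fst r - 1) = 0)}"

lemma word_graph_iff:
  "((i,n),w) \<in> word_graph N r ws \<longleftrightarrow> 1 \<le> i \<and> i \<le> N \<and> (i,n) \<noteq> r \<and>
     (n = 0 \<and> w = outer_step N i \<or> n = 1 \<and> w = inner_step N i (ws!(i-1)))"
  unfolding word_graph_def by auto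

lemma DA_iff:
  assumes "3 \<le> N"
  shows "((i,n),w) \<in> DA N \<longleftrightarrow> 1 \<le> i \<and> i \<le> N \<and>
     (n = 0 \<and> w = outer_step N i \<or> n = 1 \<and> (w = (i,0) \<or> w = (cpred N i,1) \<or> w = (csuc N i,1)))"
  using assms unfolding DA_def outer_step_def by auto

lemma csuc_neq_cpred: "3 \<le> N \<Longrightarrow> 1 \<le> i \<Longrightarrow> i \<le> N \<Longrightarrow> csuc N i \<noteq> cpred N i"
  unfolding csuc_def cpred_def by auto

lemma inner_step_inject:
  "\<lbrakk>3 \<le> N; 1 \<le> i; i \<le> N; k \<le> 2; k' \<le> 2; inner_step N i k = inner_step N i k'\<rbrakk> \<Longrightarrow> k = k'"
  using csuc_neq_cpred[of N i] unfolding inner_step_def by (auto split: if_splits)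

lemma single_valued_word_graph: "single_valued (word_graph N r ws)"
proof (rule single_valuedI)
  fix v w w' assume "(v,w) \<in> word_graph N r ws" "(v,w') \<in> word_graph N r ws"
  then show "w = w'" by (cases v) (auto simp: word_graph_iff)
qed

lemma Domain_word_graph: "Domain (word_graph N r ws) = DV N - {r}"
  unfolding DV_def by (force simp: word_graph_iff)

lemma nth_choice_word_le_2:
  "ws \<in> choice_words N r \<Longrightarrow> 1 \<le> i \<Longrightarrow> i \<le> N \<Longrightarrow> ws!(i-1) \<le> 2"
  unfolding choice_words_def using nth_mem[of "i - 1" ws] by fastforce

lemma word_graph_in_tree:
  assumes "3 \<le> N" and "acyclic (word_graph N r ws)"
  shows "is_in_tree (DV N) (DA N) r (word_graph N r ws)"
proof -
  have "word_graph N r ws \<subseteq> DA N"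
    using assms(1) unfolding word_graph_def DA_def outer_step_def inner_step_def by auto
  moreover have "v \<in> DV N \<Longrightarrow> v \<noteq> r \<Longrightarrow> \<exists>!w. (v,w) \<in> word_graph N r ws" for v
    using Domain_word_graph[of N r ws] single_valued_word_graph[of N r ws]
    by (auto dest: single_valuedD)
  moreover have "(r,w) \<notin> word_graph N r ws" for w
    by (cases r) (simp add: word_graph_iff)
  ultimately show ?thesis using assms(2) unfolding is_in_tree_def by blast
qed

definition word_of_tree :: "nat \<Rightarrow> nat \<times> nat \<Rightarrow> ((nat \<times> nat) \<times> (nat \<times> nat)) set \<Rightarrow> nat list" where
  "word_of_tree N r T = map (\<lambda>i. if (i,1) = r \<or> ((i,1),(i,0)) \<in> T then 0
      else if ((i,1),(cpred N i,1)) \<in> T then 1 else 2) [1..<N+1]"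

lemma word_of_tree_in_choice_words:
  "r \<in> DV N \<Longrightarrow> word_of_tree N r T \<in> choice_words N r"
  unfolding choice_words_def word_of_tree_def DV_def by (auto simp del: upt_Suc)

lemma in_tree_subset_word_graph:
  assumes N: "3 \<le> N" and T: "is_in_tree (DV N) (DA N) r T"
  shows "T \<subseteq> word_graph N r (word_of_tree N r T)"
proof
  fix e assume "e \<in> T"
  then obtain i n w where e: "e = ((i,n),w)" and arc: "((i,n),w) \<in> T" by (metis prod.exhaust)
  have "((i,n),w) \<in> DA N" using arc T unfolding is_in_tree_def by blast
  then have i: "1 \<le> i" "i \<le> N" and n: "n = 0 \<and> w = outer_step N i \<or>
      n = 1 \<and> (w = (i,0) \<or> w = (cpred N i,1) \<or> w = (csuc N i,1))"
    unfolding DA_iff[OF N] by auto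
  have "(i,n) \<noteq> r" using arc T unfolding is_in_tree_def by blast
  moreover have "(i,n) \<in> DV N" using i n unfolding DV_def by auto
  ultimately have unique: "((i,n),x) \<in> T \<longleftrightarrow> x = w" for x
    using arc T unfolding is_in_tree_def by metis
  have entry: "word_of_tree N r T ! (i-1) = (if (i,1) = r \<or> ((i,1),(i,0)) \<in> T then 0
      else if ((i,1),(cpred N i,1)) \<in> T then 1 else 2)"
    using i unfolding word_of_tree_def by (simp del: upt_Suc)
  have "w = inner_step N i (word_of_tree N r T ! (i-1))" if "n = 1"
  proof -
    have "((i,1),x) \<in> T \<longleftrightarrow> x = w" for x using unique that by simp
    then show ?thesis
      using n that \<open>(i,n) \<noteq> r\<close> csuc_neq_cpred[OF N i] unfolding entry inner_step_def by auto
  qed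
  then show "e \<in> word_graph N r (word_of_tree N r T)"
    using e i n \<open>(i,n) \<noteq> r\<close> by (auto simp: word_graph_iff)
qed

lemma in_tree_eq_word_graph:
  assumes "3 \<le> N" and "is_in_tree (DV N) (DA N) r T"
  shows "T = word_graph N r (word_of_tree N r T)"
proof (rule subset_single_valued_eq)
  show "Domain (word_graph N r (word_of_tree N r T)) \<subseteq> Domain T"
    using assms(2) unfolding Domain_word_graph is_in_tree_def by blast
qed (use assms in_tree_subset_word_graph single_valued_word_graph in auto)

lemma inj_on_word_graph:
  assumes N: "3 \<le> N"
  shows "inj_on (word_graph N r) (choice_words N r)"
proof (rule inj_onI, rule nth_equalityI)
  fix ws ws' assume ws: "ws \<in> choice_words N r" and ws': "ws' \<in> choice_words N r"
    and eq: "word_graph N r ws = word_graph N r ws'"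
  then show "length ws = length ws'" unfolding choice_words_def by simp
  fix j assume "j < length ws"
  then have j: "1 \<le> Suc j" "Suc j \<le> N" using ws unfolding choice_words_def by auto
  show "ws!j = ws'!j"
  proof (cases "(Suc j,1) = r")
    case True
    then show ?thesis using ws ws' unfolding choice_words_def by auto
  next
    case False
    then have "((Suc j,1), inner_step N (Suc j) (ws!j)) \<in> word_graph N r ws'"
      using j eq[symmetric] by (simp add: word_graph_iff)
    then have "inner_step N (Suc j) (ws!j) = inner_step N (Suc j) (ws'!j)"
      by (simp add: word_graph_iff)
    then show ?thesis
      using inner_step_inject[OF N j] nth_choice_word_le_2[OF ws j] nth_choice_word_le_2[OF ws' j]
      by simp
  qed
qed

lemma numM_eq_card_acyclic_words:
  assumes N: "3 \<le> N" and r: "r \<in> DV N"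
  shows "numM N r = card {ws \<in> choice_words N r. acyclic (word_graph N r ws)}"
proof -
  have "{T. is_in_tree (DV N) (DA N) r T}
      = word_graph N r ` {ws \<in> choice_words N r. acyclic (word_graph N r ws)}"
  proof (intro equalityI subsetI)
    fix T assume "T \<in> {T. is_in_tree (DV N) (DA N) r T}"
    then have T: "is_in_tree (DV N) (DA N) r T" by simp
    then have "acyclic T" unfolding is_in_tree_def by simp
    with T show "T \<in> word_graph N r ` {ws \<in> choice_words N r. acyclic (word_graph N r ws)}"
      using in_tree_eq_word_graph[OF N T] word_of_tree_in_choice_words[OF r]
      by (metis (mono_tags) image_eqI mem_Collect_eq)
  qed (use word_graph_in_tree[OF N] in blast)
  moreover have "inj_on (word_graph N r) {ws \<in> choice_words N r. acyclic (word_graph N r ws)}"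
    using inj_on_word_graph[OF N] by (rule inj_on_subset) blast
  ultimately show ?thesis unfolding numM_def by (simp add: card_image)
qed

section \<open>Words without a right-left pair\<close>

text \<open>Positions are \<open>1\<close>-based like the vertices: \<open>no_RL a c ws\<close> forbids a right-choice at
  some \<open>i\<close> followed by a left-choice at \<open>i + 1\<close>, for \<open>a \<le> i < c\<close>.\<close>

definition no_RL :: "nat \<Rightarrow> nat \<Rightarrow> nat list \<Rightarrow> bool" where
  "no_RL a c ws \<longleftrightarrow> (\<forall>i. a \<le> i \<and> i < c \<longrightarrow> \<not> (ws!(i-1) = 2 \<and> ws!i = 1))"

definition rl_free :: "nat list \<Rightarrow> bool" where
  "rl_free u \<longleftrightarrow> set u \<subseteq> {0,1,2} \<and> no_RL 1 (length u) u"

definition rl_free_words :: "nat \<Rightarrow> nat list set" where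
  "rl_free_words n = {u. length u = n \<and> rl_free u}"

lemma set_rl_free: "rl_free u \<Longrightarrow> set u \<subseteq> {0,1,2}"
  unfolding rl_free_def by simp

lemma no_RL_mono: "no_RL a c ws \<Longrightarrow> a \<le> a' \<Longrightarrow> c' \<le> c \<Longrightarrow> no_RL a' c' ws"
  unfolding no_RL_def by auto

lemma no_RL_split: "a \<le> m \<Longrightarrow> m \<le> c \<Longrightarrow> no_RL a c ws \<longleftrightarrow> no_RL a m ws \<and> no_RL m c ws"
  unfolding no_RL_def by (meson le_trans linorder_not_le order.strict_trans2)

lemma no_RL_Cons: "1 \<le> a \<Longrightarrow> no_RL (Suc a) (Suc c) (x # u) \<longleftrightarrow> no_RL a c u"
  unfolding no_RL_def
proof (intro iffI allI impI)
  fix i assume "\<forall>i. Suc a \<le> i \<and> i < Suc c \<longrightarrow> \<not> ((x # u)!(i-1) = 2 \<and> (x # u)!i = 1)"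
    and "1 \<le> a" "a \<le> i \<and> i < c"
  then show "\<not> (u!(i-1) = 2 \<and> u!i = 1)" by (cases i) (auto dest: spec[of _ "Suc i"])
next
  fix i assume "\<forall>i. a \<le> i \<and> i < c \<longrightarrow> \<not> (u!(i-1) = 2 \<and> u!i = 1)"
    and "1 \<le> a" "Suc a \<le> i \<and> i < Suc c"
  then show "\<not> ((x # u)!(i-1) = 2 \<and> (x # u)!i = 1)"
    by (cases i) (auto simp: nth_Cons split: nat.splits dest: spec[of _ "i - 1"])
qed

lemma no_RL_append: "c \<le> length u \<Longrightarrow> no_RL a c (u @ v) \<longleftrightarrow> no_RL a c u"
  unfolding no_RL_def by (auto simp: nth_append)

lemma rl_free_Cons:
  "rl_free (x # u) \<longleftrightarrow> x \<le> 2 \<and> rl_free u \<and> (x = 2 \<longrightarrow> u = [] \<or> hd u \<noteq> 1)"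
proof (cases u)
  case Nil
  then show ?thesis unfolding rl_free_def no_RL_def by auto
next
  case (Cons y v)
  have "no_RL 1 (Suc (length u)) (x # u) \<longleftrightarrow> no_RL 1 2 (x # u) \<and> no_RL 2 (Suc (length u)) (x # u)"
    by (rule no_RL_split) (auto simp: Cons)
  moreover have "no_RL 2 (Suc (length u)) (x # u) \<longleftrightarrow> no_RL 1 (length u) u"
    using no_RL_Cons[of 1 "length u" x u] by (simp add: numeral_2_eq_2)
  moreover have "no_RL 1 2 (x # u) \<longleftrightarrow> (x = 2 \<longrightarrow> hd u \<noteq> 1)"
    unfolding no_RL_def Cons by (auto simp: numeral_2_eq_2 le_Suc_eq)
  ultimately show ?thesis unfolding rl_free_def using Cons by auto
qed

lemma rl_free_snoc:
  "rl_free (u @ [x]) \<longleftrightarrow> rl_free u \<and> x \<le> 2 \<and> (x = 1 \<longrightarrow> u = [] \<or> last u \<noteq> 2)"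
proof (cases "u = []")
  case True
  then show ?thesis unfolding rl_free_def no_RL_def by auto
next
  case False
  then have "1 \<le> length u" by (simp add: Suc_leI)
  then have "no_RL 1 (Suc (length u)) (u @ [x]) \<longleftrightarrow>
      no_RL 1 (length u) (u @ [x]) \<and> no_RL (length u) (Suc (length u)) (u @ [x])"
    by (intro no_RL_split) auto
  moreover have "no_RL (length u) (Suc (length u)) (u @ [x]) \<longleftrightarrow> (x = 1 \<longrightarrow> last u \<noteq> 2)"
    using False unfolding no_RL_def
    by (auto simp: nth_append last_conv_nth less_Suc_eq_le dest: le_antisym)
  ultimately show ?thesis unfolding rl_free_def using False by (auto simp: no_RL_append)
qed

lemma rl_free_replicate: "c \<le> 2 \<Longrightarrow> rl_free (replicate n c)"
  unfolding rl_free_def no_RL_def by auto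

lemma finite_rl_free_words: "finite (rl_free_words n)"
proof (rule finite_subset)
  show "rl_free_words n \<subseteq> {u. set u \<subseteq> {0,1,2} \<and> length u = n}"
    unfolding rl_free_words_def rl_free_def by auto
qed (simp add: finite_lists_length_eq)

lemma rl_free_words_Suc_hd_1:
  "{u \<in> rl_free_words (Suc n). hd u = 1} = Cons 1 ` rl_free_words n"
  unfolding rl_free_words_def by (force simp: rl_free_Cons length_Suc_conv)

lemma rl_free_words_Suc_last_2:
  "{u \<in> rl_free_words (Suc n). last u = 2} = (\<lambda>u. u @ [2]) ` rl_free_words n"
proof (intro equalityI subsetI)
  fix w assume "w \<in> {u \<in> rl_free_words (Suc n). last u = 2}"
  then obtain u x where "w = u @ [x]" "length u = n" "rl_free (u @ [x])" "x = 2"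
    unfolding rl_free_words_def by (cases w rule: rev_cases) auto
  then show "w \<in> (\<lambda>u. u @ [2]) ` rl_free_words n"
    unfolding rl_free_words_def by (auto simp: rl_free_snoc)
qed (auto simp: rl_free_words_def rl_free_snoc)

lemma rl_free_words_Suc_Suc:
  "rl_free_words (Suc (Suc n)) = Cons 0 ` rl_free_words (Suc n) \<union> Cons 1 ` rl_free_words (Suc n)
     \<union> Cons 2 ` {u \<in> rl_free_words (Suc n). hd u \<noteq> 1}"
  unfolding rl_free_words_def by (force simp: rl_free_Cons length_Suc_conv)

lemma int_card_Diff_subset:
  "finite A \<Longrightarrow> B \<subseteq> A \<Longrightarrow> int (card (A - B)) = int (card A) - int (card B)"
  by (simp add: card_Diff_subset card_mono finite_subset of_nat_diff)

lemma card_rl_free_words_Suc_hd_not_1: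
  "int (card {u \<in> rl_free_words (Suc n). hd u \<noteq> 1})
     = int (card (rl_free_words (Suc n))) - int (card (rl_free_words n))"
proof -
  have "{u \<in> rl_free_words (Suc n). hd u \<noteq> 1}
      = rl_free_words (Suc n) - {u \<in> rl_free_words (Suc n). hd u = 1}" by auto
  moreover have "card {u \<in> rl_free_words (Suc n). hd u = 1} = card (rl_free_words n)"
    unfolding rl_free_words_Suc_hd_1 by (simp add: card_image)
  ultimately show ?thesis by (simp add: int_card_Diff_subset finite_rl_free_words)
qed

lemma card_rl_free_words_Suc_last_not_2:
  "int (card {u \<in> rl_free_words (Suc n). last u \<noteq> 2})
     = int (card (rl_free_words (Suc n))) - int (card (rl_free_words n))"
proof -
  have "{u \<in> rl_free_words (Suc n). last u \<noteq> 2}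
      = rl_free_words (Suc n) - {u \<in> rl_free_words (Suc n). last u = 2}" by auto
  moreover have "card {u \<in> rl_free_words (Suc n). last u = 2} = card (rl_free_words n)"
    unfolding rl_free_words_Suc_last_2 by (simp add: card_image inj_on_def)
  ultimately show ?thesis by (simp add: int_card_Diff_subset finite_rl_free_words)
qed

lemma card_rl_free_words: "int (card (rl_free_words n)) = b n"
proof (induction n rule: b.induct)
  case 1
  have "rl_free_words 0 = {[]}" unfolding rl_free_words_def rl_free_def no_RL_def by auto
  then show ?case by simp
next
  case 2
  have "rl_free_words 1 = {[0],[1],[2]}"
    unfolding rl_free_words_def rl_free_def no_RL_def by (auto simp: length_Suc_conv)
  then show ?case by simp
next
  case (3 n)
  let ?R = "rl_free_words (Suc n)"
  have "card (rl_free_words (Suc (Suc n)))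
      = card (Cons 0 ` ?R) + card (Cons 1 ` ?R) + card (Cons 2 ` {u \<in> ?R. hd u \<noteq> 1})"
    unfolding rl_free_words_Suc_Suc
    by (subst card_Un_disjoint; auto simp: finite_rl_free_words)+
  also have "\<dots> = 2 * card ?R + card {u \<in> ?R. hd u \<noteq> 1}" by (simp add: card_image)
  finally show ?case using 3 card_rl_free_words_Suc_hd_not_1[of n] by simp
qed

lemma card_rl_free_words_last_not_2_not_ones:
  "int (card {u \<in> rl_free_words (Suc n). last u \<noteq> 2 \<and> u \<noteq> replicate (Suc n) 1})
     = b (Suc n) - b n - 1"
proof -
  let ?A = "{u \<in> rl_free_words (Suc n). last u \<noteq> 2}"
  have "{u \<in> rl_free_words (Suc n). last u \<noteq> 2 \<and> u \<noteq> replicate (Suc n) 1} = ?A - {replicate (Suc n) 1}"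
    by auto
  moreover have "int (card (?A - {replicate (Suc n) 1})) = int (card ?A) - 1"
  proof (subst int_card_Diff_subset)
    show "{replicate (Suc n) 1} \<subseteq> ?A"
      unfolding rl_free_words_def by (simp add: rl_free_replicate del: replicate_Suc)
  qed (simp_all add: finite_rl_free_words)
  ultimately show ?thesis
    using card_rl_free_words_Suc_last_not_2[of n] by (simp add: card_rl_free_words)
qed

lemma card_rl_free_words_hd_not_1_not_twos:
  "int (card {v \<in> rl_free_words (Suc (Suc n)). hd v \<noteq> 1 \<and> take (Suc n) v \<noteq> replicate (Suc n) 2})
     = b (Suc (Suc n)) - b (Suc n) - 2"
proof -
  let ?twos = "{replicate (Suc n) 2 @ [0], replicate (Suc n) 2 @ [2]}"
  have "{v \<in> rl_free_words (Suc (Suc n)). hd v \<noteq> 1 \<and> take (Suc n) v = replicate (Suc n) 2} = ?twos"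
  proof (intro equalityI subsetI)
    fix v assume v: "v \<in> {v \<in> rl_free_words (Suc (Suc n)). hd v \<noteq> 1 \<and> take (Suc n) v = replicate (Suc n) 2}"
    then have "length (drop (Suc n) v) = Suc 0" unfolding rl_free_words_def by simp
    then obtain y where "drop (Suc n) v = [y]" by (cases "drop (Suc n) v") auto
    then have "v = replicate (Suc n) 2 @ [y]" using v append_take_drop_id[of "Suc n" v] by simp
    with v show "v \<in> ?twos" unfolding rl_free_words_def by (auto simp: rl_free_snoc simp del: replicate_Suc)
  qed (auto simp: rl_free_words_def rl_free_snoc rl_free_replicate simp del: replicate_Suc)
  then have "{v \<in> rl_free_words (Suc (Suc n)). hd v \<noteq> 1 \<and> take (Suc n) v \<noteq> replicate (Suc n) 2}
      = {v \<in> rl_free_words (Suc (Suc n)). hd v \<noteq> 1} - ?twos" by auto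
  moreover have "int (card ({v \<in> rl_free_words (Suc (Suc n)). hd v \<noteq> 1} - ?twos))
      = int (card {v \<in> rl_free_words (Suc (Suc n)). hd v \<noteq> 1}) - 2"
  proof (subst int_card_Diff_subset)
    show "?twos \<subseteq> {v \<in> rl_free_words (Suc (Suc n)). hd v \<noteq> 1}"
      unfolding rl_free_words_def by (auto simp: rl_free_snoc rl_free_replicate simp del: replicate_Suc)
  qed (simp_all add: finite_rl_free_words)
  ultimately show ?thesis
    using card_rl_free_words_Suc_hd_not_1[of "Suc n"] by (simp add: card_rl_free_words)
qed

section \<open>Reachability in the graph of a choice word\<close>

locale choice_word =
  fixes N :: nat and r :: "nat \<times> nat" and ws :: "nat list"
  assumes three_le_N: "3 \<le> N" and ws_choice: "ws \<in> choice_words N r"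
begin

abbreviation G :: "((nat \<times> nat) \<times> (nat \<times> nat)) set" where
  "G \<equiv> word_graph N r ws"

lemma choice_le_2: "1 \<le> i \<Longrightarrow> i \<le> N \<Longrightarrow> ws!(i-1) \<le> 2"
  using nth_choice_word_le_2[OF ws_choice] .

lemma rl_free_iff_no_RL: "rl_free ws \<longleftrightarrow> no_RL 1 N ws"
  using ws_choice unfolding choice_words_def rl_free_def by simp

lemma arc_down: "1 \<le> i \<Longrightarrow> i \<le> N \<Longrightarrow> (i,1) \<noteq> r \<Longrightarrow> ws!(i-1) = 0 \<Longrightarrow> ((i,1),(i,0)) \<in> G"
  by (simp add: word_graph_iff inner_step_def)

lemma arc_left: "2 \<le> i \<Longrightarrow> i \<le> N \<Longrightarrow> (i,1) \<noteq> r \<Longrightarrow> ws!(i-1) = 1 \<Longrightarrow> ((i,1),(i-1,1)) \<in> G"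
  by (simp add: word_graph_iff inner_step_def cpred_def)

lemma arc_left_wrap: "(1,1) \<noteq> r \<Longrightarrow> ws!0 = 1 \<Longrightarrow> ((1,1),(N,1)) \<in> G"
  using three_le_N by (simp add: word_graph_iff inner_step_def cpred_def)

lemma arc_right: "1 \<le> i \<Longrightarrow> i < N \<Longrightarrow> (i,1) \<noteq> r \<Longrightarrow> ws!(i-1) = 2 \<Longrightarrow> ((i,1),(Suc i,1)) \<in> G"
  by (simp add: word_graph_iff inner_step_def csuc_def)

lemma arc_right_wrap: "(N,1) \<noteq> r \<Longrightarrow> ws!(N-1) = 2 \<Longrightarrow> ((N,1),(1,1)) \<in> G"
  using three_le_N by (simp add: word_graph_iff inner_step_def csuc_def)

lemma arc_outer: "2 \<le> i \<Longrightarrow> i < N \<Longrightarrow> (i,0) \<noteq> r \<Longrightarrow> ((i,0),(i-1,0)) \<in> G"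
  by (simp add: word_graph_iff outer_step_def)

lemma arc_outer_wrap: "(N,0) \<noteq> r \<Longrightarrow> ((N,0),(1,0)) \<in> G"
  using three_le_N by (simp add: word_graph_iff outer_step_def)

lemma arc_outer_up: "(1,0) \<noteq> r \<Longrightarrow> ((1,0),(1,1)) \<in> G"
  using three_le_N by (simp add: word_graph_iff outer_step_def)

lemma outer_chain:
  assumes "a \<le> c" "1 \<le> a" "c < N" "\<And>k. a < k \<Longrightarrow> k \<le> c \<Longrightarrow> (k,0) \<noteq> r"
  shows "((c,0),(a,0)) \<in> G\<^sup>*"
  using assms
proof (induction c rule: dec_induct)
  case (step n)
  then have "((Suc n,0),(n,0)) \<in> G" using arc_outer[of "Suc n"] by simp
  with step show ?case by (simp add: converse_rtrancl_into_rtrancl)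
qed simp

lemma left_chain:
  assumes "a \<le> c" "1 \<le> a" "c \<le> N" "\<And>k. a < k \<Longrightarrow> k \<le> c \<Longrightarrow> (k,1) \<noteq> r \<and> ws!(k-1) = 1"
  shows "((c,1),(a,1)) \<in> G\<^sup>*"
  using assms
proof (induction c rule: dec_induct)
  case (step n)
  then have "((Suc n,1),(n,1)) \<in> G" using arc_left[of "Suc n"] step.prems(3)[of "Suc n"] by simp
  with step show ?case by (simp add: converse_rtrancl_into_rtrancl)
qed simp

lemma right_chain:
  assumes "a \<le> c" "1 \<le> a" "c \<le> N" "\<And>k. a \<le> k \<Longrightarrow> k < c \<Longrightarrow> (k,1) \<noteq> r \<and> ws!(k-1) = 2"
  shows "((a,1),(c,1)) \<in> G\<^sup>*"
  using assms
proof (induction c rule: dec_induct)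
  case (step n)
  then have "((n,1),(Suc n,1)) \<in> G" using arc_right[of n] by simp
  with step show ?case by (simp add: rtrancl_into_rtrancl)
qed simp

lemma outer_reaches_first_inner:
  assumes "snd r = 1" "1 \<le> i" "i \<le> N"
  shows "((i,0),(1,1)) \<in> G\<^sup>*"
proof -
  have nonroot: "(k,0) \<noteq> r" for k using assms(1) by auto
  have "((i,0),(1,0)) \<in> G\<^sup>*"
  proof (cases "i = N")
    case True
    then show ?thesis using arc_outer_wrap nonroot by auto
  next
    case False
    then show ?thesis using outer_chain[of 1 i] assms nonroot by simp
  qed
  then show ?thesis using arc_outer_up nonroot by (simp add: rtrancl_into_rtrancl)
qed

lemma RL_pair_not_acyclic:
  assumes "1 \<le> i" "i < N" "(i,1) \<noteq> r" "(Suc i,1) \<noteq> r" "ws!(i-1) = 2" "ws!i = 1"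
  shows "\<not> acyclic G"
proof
  assume "acyclic G"
  moreover have "((i,1),(Suc i,1)) \<in> G" using assms arc_right by simp
  moreover have "((Suc i,1),(i,1)) \<in> G" using assms arc_left[of "Suc i"] by simp
  ultimately show False using acyclic_no_cycle by fastforce
qed

lemma acyclic_imp_no_RL:
  assumes "acyclic G" "1 \<le> a" "c \<le> N" "\<And>k. a \<le> k \<Longrightarrow> k \<le> c \<Longrightarrow> (k,1) \<noteq> r"
  shows "no_RL a c ws"
  unfolding no_RL_def using assms RL_pair_not_acyclic by fastforce

lemma acyclic_if_reach_root:
  assumes "\<And>v. v \<in> DV N \<Longrightarrow> v \<noteq> r \<Longrightarrow> (v,r) \<in> G\<^sup>*"
  shows "acyclic G"
proof (rule acyclic_if_reaches_sink[OF single_valued_word_graph])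
  show "(r,w) \<notin> G" for w by (cases r) (simp add: word_graph_iff)
  show "(v,w) \<in> G \<Longrightarrow> (v,r) \<in> G\<^sup>*" for v w
    using assms Domain_word_graph[of N r ws] by blast
qed

text \<open>On a stretch \<open>[a,m]\<close> of inner vertices without a right-left pair, a left walk
  only meets left- and down-choices and a right walk only right- and down-choices, so
  every vertex leaves the stretch downwards or through one of its two ends.\<close>

lemma interval_reaches_unless_right:
  assumes "a \<le> k" "k \<le> m" "1 \<le> a" "m \<le> N"
    and nonroot: "\<And>k. a \<le> k \<Longrightarrow> k \<le> m \<Longrightarrow> (k,1) \<noteq> r"
    and no_RL: "no_RL a m ws"
    and down: "\<And>k. a \<le> k \<Longrightarrow> k \<le> m \<Longrightarrow> ws!(k-1) = 0 \<Longrightarrow> ((k,1),t) \<in> G\<^sup>*"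
    and left_exit: "ws!(a-1) = 1 \<Longrightarrow> ((a,1),t) \<in> G\<^sup>*"
    and "ws!(k-1) \<noteq> 2"
  shows "((k,1),t) \<in> G\<^sup>*"
  using assms(1,2,9)
proof (induction k rule: dec_induct)
  case base
  then consider "ws!(a-1) = 0" | "ws!(a-1) = 1" using choice_le_2[of a] assms(3,4) by fastforce
  then show ?case using down[of a] left_exit base by cases simp_all
next
  case (step n)
  consider "ws!n = 0" | "ws!n = 1" using step choice_le_2[of "Suc n"] assms(3,4) by fastforce
  then show ?case
  proof cases
    case 1
    then show ?thesis using down[of "Suc n"] step by simp
  next
    case 2
    then have "((Suc n,1),(n,1)) \<in> G"
      using arc_left[of "Suc n"] nonroot[of "Suc n"] step assms(3,4) by simp
    moreover have "ws!(n-1) \<noteq> 2" using no_RL 2 step unfolding no_RL_def by auto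
    ultimately show ?thesis using step by (simp add: converse_rtrancl_into_rtrancl)
  qed
qed

lemma interval_reaches_unless_left:
  assumes "a \<le> k" "k \<le> m" "1 \<le> a" "m \<le> N"
    and nonroot: "\<And>k. a \<le> k \<Longrightarrow> k \<le> m \<Longrightarrow> (k,1) \<noteq> r"
    and no_RL: "no_RL a m ws"
    and down: "\<And>k. a \<le> k \<Longrightarrow> k \<le> m \<Longrightarrow> ws!(k-1) = 0 \<Longrightarrow> ((k,1),t) \<in> G\<^sup>*"
    and right_exit: "ws!(m-1) = 2 \<Longrightarrow> ((m,1),t) \<in> G\<^sup>*"
    and "ws!(k-1) \<noteq> 1"
  shows "((k,1),t) \<in> G\<^sup>*"
  using assms(2,1,9)
proof (induction k rule: inc_induct)
  case base
  then consider "ws!(m-1) = 0" | "ws!(m-1) = 2" using choice_le_2[of m] assms(3,4) by fastforce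
  then show ?case using down[of m] right_exit base by cases simp_all
next
  case (step n)
  consider "ws!(n-1) = 0" | "ws!(n-1) = 2" using step choice_le_2[of n] assms(3,4) by fastforce
  then show ?case
  proof cases
    case 1
    then show ?thesis using down[of n] step by simp
  next
    case 2
    then have "((n,1),(Suc n,1)) \<in> G"
      using arc_right[of n] nonroot[of n] step assms(3,4) by simp
    moreover have "ws!n \<noteq> 1" using no_RL 2 step unfolding no_RL_def by auto
    ultimately show ?thesis using step by (simp add: converse_rtrancl_into_rtrancl)
  qed
qed

lemma interval_reaches:
  assumes "1 \<le> a" "m \<le> N"
    and "\<And>k. a \<le> k \<Longrightarrow> k \<le> m \<Longrightarrow> (k,1) \<noteq> r"
    and "no_RL a m ws"
    and "\<And>k. a \<le> k \<Longrightarrow> k \<le> m \<Longrightarrow> ws!(k-1) = 0 \<Longrightarrow> ((k,1),t) \<in> G\<^sup>*"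
    and "ws!(a-1) = 1 \<Longrightarrow> ((a,1),t) \<in> G\<^sup>*"
    and "ws!(m-1) = 2 \<Longrightarrow> ((m,1),t) \<in> G\<^sup>*"
    and "a \<le> k" "k \<le> m"
  shows "((k,1),t) \<in> G\<^sup>*"
proof (cases "ws!(k-1) = 2")
  case True
  then show ?thesis using interval_reaches_unless_left[of a k m] assms by simp
qed (use interval_reaches_unless_right[of a k m] assms in simp)

lemma inner_root_choice: "snd r = 1 \<Longrightarrow> ws!(fst r - 1) = 0"
  using ws_choice unfolding choice_words_def by simp

lemma acyclic_imp_first_not_down:
  assumes "acyclic G" "(1,1) \<noteq> r" "(1,0) \<noteq> r"
  shows "ws!0 \<noteq> 0"
proof
  assume "ws!0 = 0"
  then have "((1,1),(1,0)) \<in> G" using arc_down[of 1] three_le_N assms by simp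
  moreover have "((1,0),(1,1)) \<in> G" using arc_outer_up assms by simp
  ultimately show False using acyclic_no_cycle[OF assms(1)] by blast
qed

lemma right_run_reaches_down:
  assumes "a \<le> m" "1 \<le> a" "m \<le> N"
    and "\<And>k. a \<le> k \<Longrightarrow> k \<le> m \<Longrightarrow> (k,1) \<noteq> r"
    and "no_RL a m ws" "ws!(a-1) \<noteq> 1" "\<exists>j. a \<le> j \<and> j \<le> m \<and> ws!(j-1) \<noteq> 2"
  shows "\<exists>j. a \<le> j \<and> j \<le> m \<and> ws!(j-1) = 0 \<and> ((a,1),(j,1)) \<in> G\<^sup>*"
  using assms
proof (induction a rule: inc_induct)
  case base
  then show ?case using choice_le_2[of m] by fastforce
next
  case (step n)
  show ?case
  proof (cases "ws!(n-1) = 0")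
    case True
    then show ?thesis using step.hyps by auto
  next
    case False
    then have right: "ws!(n-1) = 2" using step.prems choice_le_2[of n] step.hyps by fastforce
    then have "((n,1),(Suc n,1)) \<in> G" using arc_right[of n] step by simp
    moreover have "\<exists>j. Suc n \<le> j \<and> j \<le> m \<and> ws!(j-1) = 0 \<and> ((Suc n,1),(j,1)) \<in> G\<^sup>*"
    proof (rule step.IH)
      show "no_RL (Suc n) m ws" using step.prems(4) by (rule no_RL_mono) auto
      show "ws!(Suc n - 1) \<noteq> 1" using step.prems(4) right step.hyps unfolding no_RL_def by auto
      show "\<exists>j. Suc n \<le> j \<and> j \<le> m \<and> ws!(j-1) \<noteq> 2"
        using step.prems(6) right by (metis le_antisym not_less_eq_eq)
    qed (use step in auto)
    ultimately show ?thesis by (meson Suc_leD converse_rtrancl_into_rtrancl)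
  qed
qed

lemma left_run_reaches_down:
  assumes "a \<le> m" "2 \<le> a" "m \<le> N"
    and "\<And>k. a \<le> k \<Longrightarrow> k \<le> m \<Longrightarrow> (k,1) \<noteq> r"
    and "no_RL a m ws" "ws!(m-1) \<noteq> 2" "\<exists>j. a \<le> j \<and> j \<le> m \<and> ws!(j-1) \<noteq> 1"
  shows "\<exists>j. a \<le> j \<and> j \<le> m \<and> ws!(j-1) = 0 \<and> ((m,1),(j,1)) \<in> G\<^sup>*"
  using assms
proof (induction m rule: dec_induct)
  case base
  then show ?case using choice_le_2[of a] by fastforce
next
  case (step n)
  show ?case
  proof (cases "ws!n = 0")
    case True
    then show ?thesis using step.hyps by (intro exI[of _ "Suc n"]) auto
  next
    case False
    then have left: "ws!n = 1" using step.prems choice_le_2[of "Suc n"] step.hyps by fastforce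
    then have "((Suc n,1),(n,1)) \<in> G" using arc_left[of "Suc n"] step by simp
    moreover have "\<exists>j. a \<le> j \<and> j \<le> n \<and> ws!(j-1) = 0 \<and> ((n,1),(j,1)) \<in> G\<^sup>*"
    proof (rule step.IH)
      show "no_RL a n ws" using step.prems(4) by (rule no_RL_mono) auto
      show "ws!(n - 1) \<noteq> 2" using step.prems(4) left step.hyps unfolding no_RL_def by auto
      show "\<exists>j. a \<le> j \<and> j \<le> n \<and> ws!(j-1) \<noteq> 1"
        using step.prems(6) left by (metis diff_Suc_1 le_SucE)
    qed (use step in auto)
    ultimately show ?thesis by (force intro: converse_rtrancl_into_rtrancl)
  qed
qed

end

section \<open>The three roots\<close>

lemma acyclic_word_graph_root_11:
  assumes "3 \<le> N" "ws \<in> choice_words N (1,1)"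
  shows "acyclic (word_graph N (1,1) ws) \<longleftrightarrow> rl_free ws"
proof -
  interpret choice_word N "(1,1)" ws using assms by unfold_locales
  have "ws!0 = 0" using inner_root_choice by simp
  then have "rl_free ws \<longleftrightarrow> no_RL 2 N ws"
    using three_le_N unfolding rl_free_iff_no_RL by (subst no_RL_split[of 1 2]) (auto simp: no_RL_def)
  moreover have "acyclic G" if "no_RL 2 N ws"
  proof (rule acyclic_if_reach_root)
    fix v assume "v \<in> DV N" "v \<noteq> (1,1)"
    moreover obtain i n where v: "v = (i,n)" by (cases v)
    ultimately have i: "1 \<le> i" "i \<le> N" "n = 0 \<or> n = 1 \<and> 2 \<le> i" unfolding DV_def by auto
    have down: "((k,1),(1,1)) \<in> G\<^sup>*" if "2 \<le> k" "k \<le> N" "ws!(k-1) = 0" for k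
      using arc_down[of k] outer_reaches_first_inner[of k] that by (simp add: converse_rtrancl_into_rtrancl)
    have "((i,1),(1,1)) \<in> G\<^sup>*" if "2 \<le> i" "i \<le> N"
    proof (rule interval_reaches[of 2 N])
      show "ws!(2-1) = 1 \<Longrightarrow> ((2,1),(1,1)) \<in> G\<^sup>*" using arc_left[of 2] three_le_N by simp
      show "ws!(N-1) = 2 \<Longrightarrow> ((N,1),(1,1)) \<in> G\<^sup>*" using arc_right_wrap three_le_N by simp
    qed (use that \<open>no_RL 2 N ws\<close> down in auto)
    then show "(v,(1,1)) \<in> G\<^sup>*" using v i outer_reaches_first_inner by auto
  qed
  moreover have "acyclic G \<Longrightarrow> no_RL 2 N ws" by (rule acyclic_imp_no_RL) auto
  ultimately show ?thesis by blast
qed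

lemma acyclic_words_root_11:
  assumes "3 \<le> N"
  shows "{ws \<in> choice_words N (1,1). rl_free ws} = Cons 0 ` rl_free_words (N-1)"
proof (intro equalityI subsetI)
  fix ws assume "ws \<in> {ws \<in> choice_words N (1,1). rl_free ws}"
  moreover from this obtain x u where "ws = x # u" using assms unfolding choice_words_def
    by (cases ws) auto
  ultimately show "ws \<in> Cons 0 ` rl_free_words (N-1)"
    unfolding choice_words_def rl_free_words_def by (auto simp: rl_free_Cons)
next
  fix ws assume "ws \<in> Cons 0 ` rl_free_words (N-1)"
  then obtain u where "ws = 0 # u" "length u = N - 1" "rl_free u" unfolding rl_free_words_def by auto
  then show "ws \<in> {ws \<in> choice_words N (1,1). rl_free ws}"
    using assms set_rl_free[of u] unfolding choice_words_def by (auto simp: rl_free_Cons)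
qed

lemma numM_root_11:
  assumes "3 \<le> N"
  shows "int (numM N (1,1)) = b (N - 1)"
proof -
  have "(1,1) \<in> DV N" using assms unfolding DV_def by auto
  moreover have "{ws \<in> choice_words N (1,1). acyclic (word_graph N (1,1) ws)}
      = {ws \<in> choice_words N (1,1). rl_free ws}"
    using acyclic_word_graph_root_11[OF assms] by blast
  ultimately have "numM N (1,1) = card {ws \<in> choice_words N (1,1). rl_free ws}"
    using numM_eq_card_acyclic_words[OF assms] by simp
  also have "\<dots> = card (rl_free_words (N-1))"
    unfolding acyclic_words_root_11[OF assms] by (simp add: card_image)
  finally show ?thesis by (simp add: card_rl_free_words)
qed

locale root_21 = choice_word N "(2,1)" ws for N ws
begin

lemma acyclic_if_inner_reach_root:
  assumes "\<And>i. 1 \<le> i \<Longrightarrow> i \<le> N \<Longrightarrow> i \<noteq> 2 \<Longrightarrow> ((i,1),(2,1)) \<in> G\<^sup>*"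
  shows "acyclic G"
proof (rule acyclic_if_reach_root)
  fix v assume "v \<in> DV N" "v \<noteq> (2,1)"
  moreover obtain i n where v: "v = (i,n)" by (cases v)
  ultimately have i: "1 \<le> i" "i \<le> N" "n = 0 \<or> n = 1 \<and> i \<noteq> 2" unfolding DV_def by auto
  show "(v,(2,1)) \<in> G\<^sup>*"
  proof (cases "n = 0")
    case True
    then have "(v,(1,1)) \<in> G\<^sup>*" using v i outer_reaches_first_inner[of i] by auto
    moreover have "((1,1),(2,1)) \<in> G\<^sup>*" using assms[of 1] three_le_N by simp
    ultimately show ?thesis by (rule rtrancl_trans)
  qed (use assms v i in auto)
qed

lemma inner_reach_root_if_right_start:
  assumes "ws!0 = 2" "no_RL 3 N ws" "1 \<le> i" "i \<le> N" "i \<noteq> 2"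
  shows "((i,1),(2,1)) \<in> G\<^sup>*"
proof -
  have first: "((1,1),(2,1)) \<in> G\<^sup>*"
    using arc_right[of 1] assms(1) three_le_N by (simp add: numeral_2_eq_2)
  have "((i,1),(2,1)) \<in> G\<^sup>*" if "3 \<le> i" "i \<le> N"
  proof (rule interval_reaches[of 3 N])
    show "((k,1),(2,1)) \<in> G\<^sup>*" if "3 \<le> k" "k \<le> N" "ws!(k-1) = 0" for k
      using arc_down[of k] outer_reaches_first_inner[of k] first that
      by (simp add: converse_rtrancl_into_rtrancl)
    show "ws!(3-1) = 1 \<Longrightarrow> ((3,1),(2,1)) \<in> G\<^sup>*" using arc_left[of 3] three_le_N by simp
    show "ws!(N-1) = 2 \<Longrightarrow> ((N,1),(2,1)) \<in> G\<^sup>*"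
      using arc_right_wrap three_le_N first by (simp add: converse_rtrancl_into_rtrancl)
  qed (use that assms(2) in auto)
  with first assms(3-5) show ?thesis by (cases "i = 1") auto
qed

lemma inner_reach_root_if_all_left:
  assumes "ws!0 = 1" "\<forall>i. 3 \<le> i \<and> i \<le> N \<longrightarrow> ws!(i-1) = 1" "1 \<le> i" "i \<le> N" "i \<noteq> 2"
  shows "((i,1),(2,1)) \<in> G\<^sup>*"
proof -
  have all_left: "((k,1),(2,1)) \<in> G\<^sup>*" if "2 \<le> k" "k \<le> N" for k
    using left_chain[of 2 k] assms(2) that by simp
  then have "((1,1),(2,1)) \<in> G\<^sup>*"
    using arc_left_wrap assms(1) three_le_N by (simp add: converse_rtrancl_into_rtrancl)
  with all_left assms(3-5) show ?thesis by (cases "i = 1") auto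
qed

lemma right_start_or_all_left_if_acyclic:
  assumes acyclic: "acyclic G"
  shows "ws!0 = 2 \<and> no_RL 3 N ws \<or> ws!0 = 1 \<and> (\<forall>i. 3 \<le> i \<and> i \<le> N \<longrightarrow> ws!(i-1) = 1)"
proof -
  have no_RL: "no_RL 3 N ws" using acyclic by (rule acyclic_imp_no_RL) auto
  have "ws!0 \<noteq> 0" using acyclic by (rule acyclic_imp_first_not_down) auto
  then consider "ws!0 = 2" | "ws!0 = 1" using choice_le_2[of 1] three_le_N by fastforce
  then show ?thesis
  proof cases
    case 2
    have to_N: "((1,1),(N,1)) \<in> G" using arc_left_wrap 2 by simp
    have "ws!(N-1) \<noteq> 2"
      using acyclic_no_cycle[OF acyclic to_N] arc_right_wrap three_le_N by auto
    moreover have "\<not> (\<exists>j. 3 \<le> j \<and> j \<le> N \<and> ws!(j-1) \<noteq> 1)"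
    proof
      assume "\<exists>j. 3 \<le> j \<and> j \<le> N \<and> ws!(j-1) \<noteq> 1"
      with \<open>ws!(N-1) \<noteq> 2\<close> obtain j where j: "3 \<le> j" "j \<le> N" "ws!(j-1) = 0"
        and "((N,1),(j,1)) \<in> G\<^sup>*"
        using left_run_reaches_down[of 3 N] no_RL three_le_N by auto
      moreover have "((j,1),(1,1)) \<in> G\<^sup>*"
        using arc_down[of j] outer_reaches_first_inner[of j] j by (simp add: converse_rtrancl_into_rtrancl)
      ultimately show False using acyclic_no_cycle[OF acyclic to_N] by (meson rtrancl_trans)
    qed
    ultimately show ?thesis using 2 by auto
  qed (use no_RL in simp)
qed

end

lemma acyclic_word_graph_root_21:
  assumes "3 \<le> N" "ws \<in> choice_words N (2,1)"
  shows "acyclic (word_graph N (2,1) ws) \<longleftrightarrow>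
    ws!0 = 2 \<and> no_RL 3 N ws \<or> ws!0 = 1 \<and> (\<forall>i. 3 \<le> i \<and> i \<le> N \<longrightarrow> ws!(i-1) = 1)"
proof -
  interpret root_21 N ws using assms by unfold_locales
  show ?thesis
    using right_start_or_all_left_if_acyclic acyclic_if_inner_reach_root
      inner_reach_root_if_right_start inner_reach_root_if_all_left by blast
qed

lemma acyclic_words_root_21:
  assumes "3 \<le> N"
  shows "{ws \<in> choice_words N (2,1).
      ws!0 = 2 \<and> no_RL 3 N ws \<or> ws!0 = 1 \<and> (\<forall>i. 3 \<le> i \<and> i \<le> N \<longrightarrow> ws!(i-1) = 1)}
    = Cons 2 ` Cons 0 ` rl_free_words (N-2) \<union> {1 # 0 # replicate (N-2) 1}"
proof -
  define m where "m = N - 2"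
  have N: "N = Suc (Suc m)" using assms unfolding m_def by simp
  have words: "ws \<in> choice_words N (2,1) \<longleftrightarrow>
      (\<exists>x u. ws = x # 0 # u \<and> x \<le> 2 \<and> length u = m \<and> set u \<subseteq> {0,1,2})" for ws
  proof
    assume ws: "ws \<in> choice_words N (2,1)"
    then have "length ws = Suc (Suc m)" unfolding choice_words_def N by simp
    then obtain x y u where "ws = x # y # u" by (auto simp: length_Suc_conv)
    with ws show "\<exists>x u. ws = x # 0 # u \<and> x \<le> 2 \<and> length u = m \<and> set u \<subseteq> {0,1,2}"
      unfolding choice_words_def N by auto
  qed (auto simp: choice_words_def N)
  have no_RL_shift: "no_RL 3 N (x # y # u) \<longleftrightarrow> no_RL 1 m u" for x y u
    using no_RL_Cons[of 2 "Suc m" x "y # u"] no_RL_Cons[of 1 m y u] N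
    by (simp add: numeral_3_eq_3 numeral_2_eq_2)
  have all_left: "(\<forall>i. 3 \<le> i \<and> i \<le> N \<longrightarrow> (x # y # u)!(i-1) = 1) \<longleftrightarrow> u = replicate m 1"
    if "length u = m" for x y u
    using nth_infix_eq_replicate_iff[of "[x,y]" 2 u m "[]" 1] that N
    by (simp add: Suc_le_eq numeral_3_eq_3 numeral_2_eq_2)
  have R: "rl_free_words (N-2) = {u. length u = m \<and> set u \<subseteq> {0,1,2} \<and> no_RL 1 m u}"
    unfolding rl_free_words_def rl_free_def m_def by auto
  show ?thesis
  proof (intro equalityI subsetI)
    fix ws assume "ws \<in> {ws \<in> choice_words N (2,1).
      ws!0 = 2 \<and> no_RL 3 N ws \<or> ws!0 = 1 \<and> (\<forall>i. 3 \<le> i \<and> i \<le> N \<longrightarrow> ws!(i-1) = 1)}"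
    then obtain x u where ws: "ws = x # 0 # u" "length u = m" "set u \<subseteq> {0,1,2}"
      and "x = 2 \<and> no_RL 3 N ws \<or> x = 1 \<and> (\<forall>i. 3 \<le> i \<and> i \<le> N \<longrightarrow> ws!(i-1) = 1)"
      unfolding words by auto
    then show "ws \<in> Cons 2 ` Cons 0 ` rl_free_words (N-2) \<union> {1 # 0 # replicate (N-2) 1}"
      unfolding R using no_RL_shift all_left[of u x 0] m_def by auto
  next
    fix ws assume "ws \<in> Cons 2 ` Cons 0 ` rl_free_words (N-2) \<union> {1 # 0 # replicate (N-2) 1}"
    then obtain x u where ws: "ws = x # 0 # u" "length u = m" "set u \<subseteq> {0,1,2}"
      and "x = 2 \<and> no_RL 1 m u \<or> x = 1 \<and> u = replicate m 1"
      unfolding R m_def by (auto simp: set_replicate_conv_if)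
    then show "ws \<in> {ws \<in> choice_words N (2,1).
      ws!0 = 2 \<and> no_RL 3 N ws \<or> ws!0 = 1 \<and> (\<forall>i. 3 \<le> i \<and> i \<le> N \<longrightarrow> ws!(i-1) = 1)}"
      unfolding words using no_RL_shift all_left[of u x 0] by auto
  qed
qed

lemma numM_root_21:
  assumes "3 \<le> N"
  shows "int (numM N (2,1)) = b (N - 2) + 1"
proof -
  have "(2,1) \<in> DV N" using assms unfolding DV_def by auto
  then have "numM N (2,1) = card (Cons 2 ` Cons 0 ` rl_free_words (N-2) \<union> {1 # 0 # replicate (N-2) 1})"
    using numM_eq_card_acyclic_words[OF assms] acyclic_words_root_21[OF assms]
      acyclic_word_graph_root_21[OF assms] by (simp cong: conj_cong)
  also have "\<dots> = card (Cons 2 ` Cons 0 ` rl_free_words (N-2)) + 1"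
    by (subst card_Un_disjoint) (auto simp: finite_rl_free_words)
  also have "card (Cons 2 ` Cons 0 ` rl_free_words (N-2)) = card (rl_free_words (N-2))"
    by (simp add: card_image inj_on_def)
  finally show ?thesis by (simp add: card_rl_free_words)
qed

locale root_20 = choice_word N "(2,0)" ws for N ws
begin

lemma outer_reaches_root: "3 \<le> i \<Longrightarrow> i < N \<Longrightarrow> ((i,0),(2,0)) \<in> G\<^sup>*"
  by (rule outer_chain) auto

lemma down_reaches_root:
  assumes "2 \<le> k" "k < N" "ws!(k-1) = 0"
  shows "((k,1),(2,0)) \<in> G\<^sup>*"
proof -
  have "((k,1),(k,0)) \<in> G" using arc_down[of k] assms by simp
  moreover have "((k,0),(2,0)) \<in> G\<^sup>*"
    using outer_reaches_root[of k] assms by (cases "k = 2") auto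
  ultimately show ?thesis by (rule converse_rtrancl_into_rtrancl)
qed

lemma last_reaches_first:
  assumes "ws!(N-1) \<noteq> 1"
  shows "((N,1),(1,1)) \<in> G\<^sup>+"
proof (cases "ws!(N-1) = 0")
  case True
  then have "((N,1),(N,0)) \<in> G" using arc_down[of N] three_le_N by simp
  moreover have "((N,0),(1,0)) \<in> G" "((1,0),(1,1)) \<in> G"
    using arc_outer_wrap arc_outer_up three_le_N by auto
  ultimately show ?thesis by (meson trancl.simps)
next
  case False
  then have "ws!(N-1) = 2" using assms choice_le_2[of N] three_le_N by fastforce
  then show ?thesis using arc_right_wrap by auto
qed

lemma acyclic_if_inner_reach_root:
  assumes "\<And>i. 1 \<le> i \<Longrightarrow> i \<le> N \<Longrightarrow> ((i,1),(2,0)) \<in> G\<^sup>*"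
  shows "acyclic G"
proof (rule acyclic_if_reach_root)
  fix v assume "v \<in> DV N" "v \<noteq> (2,0)"
  moreover obtain i n where v: "v = (i,n)" by (cases v)
  ultimately have i: "1 \<le> i" "i \<le> N" "n = 0 \<and> i \<noteq> 2 \<or> n = 1" unfolding DV_def by auto
  have "((1,0),(2,0)) \<in> G\<^sup>*"
    using arc_outer_up assms[of 1] three_le_N by (simp add: converse_rtrancl_into_rtrancl)
  moreover have "((N,0),(2,0)) \<in> G\<^sup>*"
    using arc_outer_wrap three_le_N \<open>((1,0),(2,0)) \<in> G\<^sup>*\<close>
    by (simp add: converse_rtrancl_into_rtrancl)
  ultimately show "(v,(2,0)) \<in> G\<^sup>*"
    using v i assms outer_reaches_root[of i] by (cases "i = 1"; cases "i = N") auto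
qed

lemma inner_reach_root_if_left_start:
  assumes no_RL: "no_RL 1 N ws" and first: "ws!0 = 1" and last: "ws!(N-1) = 1"
    and "\<exists>j. 2 \<le> j \<and> j < N \<and> ws!(j-1) \<noteq> 1" and i: "1 \<le> i" "i \<le> N"
  shows "((i,1),(2,0)) \<in> G\<^sup>*"
proof -
  have "ws!(N-1-1) \<noteq> 2"
    using no_RL last three_le_N unfolding no_RL_def by (auto dest: spec[of _ "N-1"])
  with assms(4) have "\<exists>j. 2 \<le> j \<and> j \<le> N-1 \<and> ws!(j-1) = 0 \<and> ((N-1,1),(j,1)) \<in> G\<^sup>*"
    using no_RL_mono[OF no_RL, of 2 "N-1"] three_le_N by (intro left_run_reaches_down) auto
  then have "((N-1,1),(2,0)) \<in> G\<^sup>*"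
    using down_reaches_root three_le_N by (auto intro: rtrancl_trans)
  then have last_reach: "((N,1),(2,0)) \<in> G\<^sup>*"
    using arc_left[of N] last three_le_N by (simp add: converse_rtrancl_into_rtrancl)
  then have first_reach: "((1,1),(2,0)) \<in> G\<^sup>*"
    using arc_left_wrap first by (simp add: converse_rtrancl_into_rtrancl)
  have "((i,1),(2,0)) \<in> G\<^sup>*" if "2 \<le> i" "i \<le> N - 1"
  proof (rule interval_reaches[of 2 "N-1"])
    show "ws!(2-1) = 1 \<Longrightarrow> ((2,1),(2,0)) \<in> G\<^sup>*"
      using arc_left[of 2] three_le_N first_reach by (simp add: converse_rtrancl_into_rtrancl)
  qed (use that no_RL_mono[OF no_RL] down_reaches_root \<open>ws!(N-1-1) \<noteq> 2\<close> in auto)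
  with i first_reach last_reach show ?thesis by (cases "i = 1 \<or> i = N") auto
qed

lemma inner_reach_root_if_right_start:
  assumes no_RL: "no_RL 1 N ws" and first: "ws!0 = 2"
    and "\<exists>j. 2 \<le> j \<and> j < N \<and> ws!(j-1) \<noteq> 2" and i: "1 \<le> i" "i \<le> N"
  shows "((i,1),(2,0)) \<in> G\<^sup>*"
proof -
  have "ws!1 \<noteq> 1" using no_RL first three_le_N unfolding no_RL_def by (auto dest: spec[of _ 1])
  with assms(3) have "\<exists>j. 2 \<le> j \<and> j \<le> N-1 \<and> ws!(j-1) = 0 \<and> ((2,1),(j,1)) \<in> G\<^sup>*"
    using no_RL_mono[OF no_RL, of 2 "N-1"] three_le_N by (intro right_run_reaches_down) auto
  then have "((2,1),(2,0)) \<in> G\<^sup>*"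
    using down_reaches_root three_le_N by (auto intro: rtrancl_trans)
  then have first_reach: "((1,1),(2,0)) \<in> G\<^sup>*"
    using arc_right[of 1] first three_le_N by (simp add: converse_rtrancl_into_rtrancl numeral_2_eq_2)
  have "((i,1),(2,0)) \<in> G\<^sup>*" if "2 \<le> i" "i \<le> N"
  proof (rule interval_reaches[of 2 N])
    show "ws!(N-1) = 2 \<Longrightarrow> ((N,1),(2,0)) \<in> G\<^sup>*"
      using arc_right_wrap first_reach by (simp add: converse_rtrancl_into_rtrancl)
    show "((k,1),(2,0)) \<in> G\<^sup>*" if "2 \<le> k" "k \<le> N" "ws!(k-1) = 0" for k
    proof (cases "k = N")
      case True
      then have "((N,1),(1,1)) \<in> G\<^sup>*" using last_reaches_first that by (simp add: trancl_into_rtrancl)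
      then show ?thesis using first_reach \<open>k = N\<close> by simp
    qed (use that down_reaches_root in auto)
  qed (use that no_RL_mono[OF no_RL] \<open>ws!1 \<noteq> 1\<close> in auto)
  with i first_reach show ?thesis by (cases "i = 1") auto
qed

lemma last_left_if_first_reaches_last:
  assumes "acyclic G" "((1,1),(N,1)) \<in> G\<^sup>*"
  shows "ws!(N-1) = 1"
  using assms last_reaches_first unfolding acyclic_def by (meson rtrancl_trancl_trancl)

lemma left_run_stops_if_acyclic:
  assumes acyclic: "acyclic G" and first: "ws!0 = 1"
  shows "ws!(N-1) = 1 \<and> (\<exists>j. 2 \<le> j \<and> j < N \<and> ws!(j-1) \<noteq> 1)"
proof -
  have to_last: "((1,1),(N,1)) \<in> G" using arc_left_wrap first by simp
  then have last: "ws!(N-1) = 1" using acyclic last_left_if_first_reaches_last by blast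
  have "\<not> (\<forall>j. 2 \<le> j \<and> j < N \<longrightarrow> ws!(j-1) = 1)"
  proof
    assume run: "\<forall>j. 2 \<le> j \<and> j < N \<longrightarrow> ws!(j-1) = 1"
    have "((N,1),(1,1)) \<in> G\<^sup>*"
    proof (rule left_chain)
      fix k assume "1 < k" "k \<le> N"
      then show "(k,1::nat) \<noteq> (2,0) \<and> ws!(k-1) = 1" using run last by (cases "k = N") auto
    qed (use three_le_N in auto)
    then show False using acyclic_no_cycle[OF acyclic to_last] by blast
  qed
  with last show ?thesis by auto
qed

lemma right_run_stops_if_acyclic:
  assumes acyclic: "acyclic G" and first: "ws!0 = 2"
  shows "\<exists>j. 2 \<le> j \<and> j < N \<and> ws!(j-1) \<noteq> 2"
proof (rule ccontr)
  assume "\<not> ?thesis"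
  then have run: "\<forall>j. 2 \<le> j \<and> j < N \<longrightarrow> ws!(j-1) = 2" by blast
  have "((1,1),(N,1)) \<in> G\<^sup>*"
  proof (rule right_chain)
    fix k assume "1 \<le> k" "k < N"
    then show "(k,1::nat) \<noteq> (2,0) \<and> ws!(k-1) = 2" using run first by (cases "k = 1") auto
  qed (use three_le_N in auto)
  then have "ws!(N-1) = 1" using acyclic last_left_if_first_reaches_last by blast
  moreover have "no_RL 1 N ws" using acyclic by (rule acyclic_imp_no_RL) auto
  ultimately show False
    using run[rule_format, of "N-1"] three_le_N unfolding no_RL_def by (auto dest: spec[of _ "N-1"])
qed

end

lemma acyclic_word_graph_root_20:
  assumes "3 \<le> N" "ws \<in> choice_words N (2,0)"
  shows "acyclic (word_graph N (2,0) ws) \<longleftrightarrow> rl_free ws \<and>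
    (ws!0 = 1 \<and> ws!(N-1) = 1 \<and> (\<exists>j. 2 \<le> j \<and> j < N \<and> ws!(j-1) \<noteq> 1)
     \<or> ws!0 = 2 \<and> (\<exists>j. 2 \<le> j \<and> j < N \<and> ws!(j-1) \<noteq> 2))"
proof -
  interpret root_20 N ws using assms by unfold_locales
  show ?thesis
  proof
    assume acyclic: "acyclic G"
    have "ws!0 \<noteq> 0" using acyclic by (rule acyclic_imp_first_not_down) auto
    then have "ws!0 = 1 \<or> ws!0 = 2" using choice_le_2[of 1] three_le_N by fastforce
    moreover have "no_RL 1 N ws" using acyclic by (rule acyclic_imp_no_RL) auto
    ultimately show "rl_free ws \<and>
      (ws!0 = 1 \<and> ws!(N-1) = 1 \<and> (\<exists>j. 2 \<le> j \<and> j < N \<and> ws!(j-1) \<noteq> 1)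
       \<or> ws!0 = 2 \<and> (\<exists>j. 2 \<le> j \<and> j < N \<and> ws!(j-1) \<noteq> 2))"
      using left_run_stops_if_acyclic[OF acyclic] right_run_stops_if_acyclic[OF acyclic]
        rl_free_iff_no_RL by auto
  qed (use acyclic_if_inner_reach_root inner_reach_root_if_left_start
      inner_reach_root_if_right_start rl_free_iff_no_RL in blast)
qed

lemma two_le_less_Suc_Suc_iff: "(\<exists>j. 2 \<le> j \<and> j < Suc (Suc m) \<and> P j) \<longleftrightarrow> (\<exists>j. 1 < j \<and> j \<le> 1 + m \<and> P j)"
  by (metis Suc_1 Suc_le_eq add.commute less_Suc_eq_le plus_1_eq_Suc)

lemma rl_free_left_framed_iff:
  assumes "length u = m" "1 \<le> m"
  shows "rl_free (1 # u @ [1]) \<and> (\<exists>j. 2 \<le> j \<and> j < Suc (Suc m) \<and> (1 # u @ [1])!(j-1) \<noteq> 1)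
      \<longleftrightarrow> rl_free u \<and> last u \<noteq> 2 \<and> u \<noteq> replicate m 1"
proof -
  have "u \<noteq> []" using assms by auto
  moreover have "(\<exists>j. 2 \<le> j \<and> j < Suc (Suc m) \<and> ([1] @ u @ [1])!(j-1) \<noteq> 1) \<longleftrightarrow> u \<noteq> replicate m 1"
    using nth_infix_eq_replicate_iff[of "[1]" 1 u m "[1]" 1] assms(1)
    unfolding two_le_less_Suc_Suc_iff by auto
  ultimately show ?thesis by (auto simp: rl_free_Cons rl_free_snoc)
qed

lemma rl_free_right_start_iff:
  assumes "length v = Suc m"
  shows "rl_free (2 # v) \<and> (\<exists>j. 2 \<le> j \<and> j < Suc (Suc m) \<and> (2 # v)!(j-1) \<noteq> 2)
      \<longleftrightarrow> rl_free v \<and> hd v \<noteq> 1 \<and> take m v \<noteq> replicate m 2"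
proof -
  have "v \<noteq> []" using assms by auto
  moreover have "(\<exists>j. 2 \<le> j \<and> j < Suc (Suc m) \<and> ([2] @ take m v @ drop m v)!(j-1) \<noteq> 2)
      \<longleftrightarrow> take m v \<noteq> replicate m 2"
    using nth_infix_eq_replicate_iff[of "[2]" 1 "take m v" m "drop m v" 2] assms
    unfolding two_le_less_Suc_Suc_iff by auto
  ultimately show ?thesis by (auto simp: rl_free_Cons)
qed

lemma acyclic_words_root_20:
  assumes N: "N = Suc (Suc m)" and "1 \<le> m"
  shows "{ws \<in> choice_words N (2,0). rl_free ws \<and>
      (ws!0 = 1 \<and> ws!(N-1) = 1 \<and> (\<exists>j. 2 \<le> j \<and> j < N \<and> ws!(j-1) \<noteq> 1)
       \<or> ws!0 = 2 \<and> (\<exists>j. 2 \<le> j \<and> j < N \<and> ws!(j-1) \<noteq> 2))}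
    = (\<lambda>u. 1 # u @ [1]) ` {u \<in> rl_free_words m. last u \<noteq> 2 \<and> u \<noteq> replicate m 1}
      \<union> Cons 2 ` {v \<in> rl_free_words (Suc m). hd v \<noteq> 1 \<and> take m v \<noteq> replicate m 2}"
    (is "?L = ?R")
proof -
  have words: "ws \<in> choice_words N (2,0) \<and> rl_free ws \<longleftrightarrow> length ws = N \<and> rl_free ws" for ws
    unfolding choice_words_def using set_rl_free by auto
  show ?thesis
  proof (intro equalityI subsetI)
    fix ws assume "ws \<in> ?L"
    then have len: "length ws = N" and free: "rl_free ws"
      and cond: "ws!0 = 1 \<and> ws!(N-1) = 1 \<and> (\<exists>j. 2 \<le> j \<and> j < N \<and> ws!(j-1) \<noteq> 1)
       \<or> ws!0 = 2 \<and> (\<exists>j. 2 \<le> j \<and> j < N \<and> ws!(j-1) \<noteq> 2)"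
      using words by auto
    obtain x v where ws: "ws = x # v" and v: "length v = Suc m" using len N by (cases ws) auto
    from cond show "ws \<in> ?R"
    proof (elim disjE conjE)
      assume first: "ws!0 = 1" and last: "ws!(N-1) = 1"
        and run: "\<exists>j. 2 \<le> j \<and> j < N \<and> ws!(j-1) \<noteq> 1"
      obtain u y where vu: "v = u @ [y]" using v by (cases v rule: rev_cases) auto
      then have u: "length u = m" using v by simp
      then have "ws = 1 # u @ [1]" using first last N unfolding ws vu by (simp add: nth_append)
      moreover have "rl_free u \<and> last u \<noteq> 2 \<and> u \<noteq> replicate m 1"
        using rl_free_left_framed_iff[OF u \<open>1 \<le> m\<close>] free run \<open>ws = 1 # u @ [1]\<close> N by simp
      ultimately show "ws \<in> ?R" using u unfolding rl_free_words_def by blast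
    next
      assume "ws!0 = 2" and run: "\<exists>j. 2 \<le> j \<and> j < N \<and> ws!(j-1) \<noteq> 2"
      then have "ws = 2 # v" using ws by simp
      moreover have "rl_free v \<and> hd v \<noteq> 1 \<and> take m v \<noteq> replicate m 2"
        using rl_free_right_start_iff[OF v] free run \<open>ws = 2 # v\<close> N by simp
      ultimately show "ws \<in> ?R" using v unfolding rl_free_words_def by blast
    qed
  next
    fix ws assume "ws \<in> ?R"
    then consider u where "ws = 1 # u @ [1]" "length u = m" "rl_free u" "last u \<noteq> 2" "u \<noteq> replicate m 1"
      | v where "ws = 2 # v" "length v = Suc m" "rl_free v" "hd v \<noteq> 1" "take m v \<noteq> replicate m 2"
      unfolding rl_free_words_def by auto
    then show "ws \<in> ?L"
    proof cases
      case 1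
      then have "length ws = N" "ws!0 = 1" "ws!(N-1) = 1" using N by (simp_all add: nth_append)
      moreover have "rl_free ws \<and> (\<exists>j. 2 \<le> j \<and> j < N \<and> ws!(j-1) \<noteq> 1)"
        using rl_free_left_framed_iff[of u m] \<open>1 \<le> m\<close> 1 N by simp
      ultimately show ?thesis using words by blast
    next
      case 2
      then have "length ws = N" "ws!0 = 2" using N by simp_all
      moreover have "rl_free ws \<and> (\<exists>j. 2 \<le> j \<and> j < N \<and> ws!(j-1) \<noteq> 2)"
        using rl_free_right_start_iff[of v m] 2 N by simp
      ultimately show ?thesis using words by blast
    qed
  qed
qed

lemma numM_root_20:
  assumes "3 \<le> N"
  shows "int (numM N (2,0)) = 2 * b (N - 1) - 3 * b (N - 2) - 3"
proof -
  define n where "n = N - 3"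
  have N: "N = Suc (Suc (Suc n))" using assms unfolding n_def by simp
  let ?A = "{u \<in> rl_free_words (Suc n). last u \<noteq> 2 \<and> u \<noteq> replicate (Suc n) 1}"
  let ?B = "{v \<in> rl_free_words (Suc (Suc n)). hd v \<noteq> 1 \<and> take (Suc n) v \<noteq> replicate (Suc n) 2}"
  have "(2,0) \<in> DV N" using assms unfolding DV_def by auto
  then have "numM N (2,0) = card ((\<lambda>u. 1 # u @ [1]) ` ?A \<union> Cons 2 ` ?B)"
    using numM_eq_card_acyclic_words[OF assms] acyclic_words_root_20[OF N]
      acyclic_word_graph_root_20[OF assms] by (simp cong: conj_cong)
  also have "\<dots> = card ?A + card ?B"
    by (subst card_Un_disjoint) (auto simp: finite_rl_free_words card_image inj_on_def)
  finally have "int (numM N (2,0)) = b (Suc n) - b n - 1 + (b (Suc (Suc n)) - b (Suc n) - 2)"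
    using card_rl_free_words_last_not_2_not_ones card_rl_free_words_hd_not_1_not_twos by simp
  then show ?thesis using N by simp
qed

section \<open>The ratchet current\<close>

lemma b_growth: "1 \<le> b n \<and> b n + 2 \<le> b (Suc n)"
  by (induction n) simp_all

theorem mainTheorem2:
  fixes N :: nat
  assumes "N \<ge> 3"
  shows "int (numM N (1,1)) = b (N - 1)
       \<and> int (numM N (2,1)) = b (N - 2) + 1
       \<and> int (numM N (2,0)) = 2 * b (N - 1) - 3 * b (N - 2) - 3
       \<and> int (numM N (2,1)) + int (numM N (2,0)) - int (numM N (1,1))
           = b (N - 1) - 2 * b (N - 2) - 2
       \<and> (N = 3 \<longrightarrow> int (numM N (2,1)) + int (numM N (2,0)) - int (numM N (1,1)) = 0)
       \<and> (N \<ge> 4 \<longrightarrow> int (numM N (2,1)) + int (numM N (2,0)) - int (numM N (1,1)) > 0)"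
proof -
  note counts = numM_root_11[OF assms] numM_root_21[OF assms] numM_root_20[OF assms]
  then have current: "int (numM N (2,1)) + int (numM N (2,0)) - int (numM N (1,1))
      = b (N - 1) - 2 * b (N - 2) - 2" by simp
  have "b (N - 1) - 2 * b (N - 2) - 2 = 0" if "N = 3"
    using that by (simp add: numeral_3_eq_3 numeral_2_eq_2)
  moreover have "b (N - 1) - 2 * b (N - 2) - 2 > 0" if "N \<ge> 4"
  proof -
    define n where "n = N - 4"
    then have "N - 1 = Suc (Suc (Suc n))" "N - 2 = Suc (Suc n)" using that by auto
    then show ?thesis using b_growth[of n] by simp
  qed
  ultimately show ?thesis using counts unfolding current by blast
qed

end
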